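(* Let $n\geq2$ and $\mathrm{Ch}_{3,n}(x)=x_1^3-3x_1(x_2^2+\dots+x_n^2)$. Then \[ \frac{1}{3n-2}\mathrm{Ch}_{3,n}(x)=\frac{n+2}{9n-6}x_1^3+\frac{4}{9n-6}\sum_{i=2}^n\left[-\Big(\frac{x_1+\sqrt3x_i}{2}\Big)^3+\Big(\frac{-x_1+\sqrt3x_i}{2}\Big)^3\right]. \] In particular, the symmetric tensor associated with $\mathrm{Ch}_{3,n}$ is critical in $\mathrm{Sym}^3(\mathbb{R}^n)$.
   Context: Tensors and norms: \begin{itemize} \item The symmetric tensor $A$ associated with a form $p\in P_{d,n}$ satisfies $p(x)=\langle A,x\otimes\cdots\otimes x\rangle_F$, where $\langle\cdot,\cdot\rangle_F$ is the Frobenius inner product. \item The spectral norm is $\|A\|_2=\max_{\|x^{(j)}\|=1}\langle A,x^{(1)}\otimes\cdots\otimes x^{(d)}\rangle_F$. \end{itemize} Generalized gradient (Clarke): for a Lipschitz function $f$ on a Euclidean space, $\partial f(p)$ is the convex hull of all limits of $\nabla f(p_i)$, taken over sequences $p_i\to p$ of differentiability points. A nonzero $A\in\mathrm{Sym}^d(\mathbb{R}^n)$ is critical in $\mathrm{Sym}^d(\mathbb{R}^n)$ if $\lambda A\in\partial g(A/\|A\|_F)$ for some $\lambda\in\mathbb{R}$, where $g$ is the spectral norm as a function on the Euclidean space $(\mathrm{Sym}^d(\mathbb{R}^n),\langle\cdot,\cdot\rangle_F)$. *)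

theory Defs
  imports "HOL-Analysis.Analysis"
begin

text \<open>Order-d tensors on R^n: the index type 'd has d elements, the index type 'n has n
elements; a tensor is a real vector indexed by multi-indices f :: 'd \<Rightarrow> 'n.
The Frobenius inner product is the standard inner product of this Euclidean space.\<close>

type_synonym ('n, 'd) tensor = "real ^ ('d \<Rightarrow> 'n)"

definition sym_tensors :: "('n::finite, 'd::finite) tensor set" where
  "sym_tensors = {A. \<forall>\<pi>::'d \<Rightarrow> 'd. bij \<pi> \<longrightarrow> (\<forall>f. A $ (f \<circ> \<pi>) = A $ f)}"

definition outer_prod :: "('d::finite \<Rightarrow> real ^ 'n::finite) \<Rightarrow> ('n, 'd) tensor" where
  "outer_prod xs = (\<chi> f. \<Prod>j\<in>UNIV. xs j $ f j)"

definition tensor_power :: "real ^ 'n::finite \<Rightarrow> ('n, 'd::finite) tensor" where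
  "tensor_power x = outer_prod (\<lambda>_. x)"

definition spectral_norm :: "('n::finite, 'd::finite) tensor \<Rightarrow> real" where
  "spectral_norm A = Sup {inner A (outer_prod xs) | xs. \<forall>j. norm (xs j) = 1}"

text \<open>Clarke generalized gradient of g on the Euclidean space given by the linear subspace S
(with the inherited inner product): convex hull of all limits of gradients of g at points
of differentiability (within S) converging to p.\<close>
definition clarke_grad_on ::
  "'a::euclidean_space set \<Rightarrow> ('a \<Rightarrow> real) \<Rightarrow> 'a \<Rightarrow> 'a set" where
  "clarke_grad_on S g p = convex hull
     {v. \<exists>ps vs. (\<forall>i. ps i \<in> S \<and> vs i \<in> S \<and>
                        (g has_derivative (\<lambda>h. inner (vs i) h)) (at (ps i) within S))
               \<and> ps \<longlonglongrightarrow> p \<and> vs \<longlonglongrightarrow> v}"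

definition critical_sym :: "('n::finite, 'd::finite) tensor \<Rightarrow> bool" where
  "critical_sym A \<longleftrightarrow> A \<in> sym_tensors \<and> A \<noteq> 0 \<and>
     (\<exists>c::real. c *\<^sub>R A \<in> clarke_grad_on sym_tensors spectral_norm (A /\<^sub>R norm A))"

text \<open>Ch_{3,n}, with the distinguished coordinate i0 playing the role of x_1.\<close>
definition Ch3 :: "'n::finite \<Rightarrow> real ^ 'n \<Rightarrow> real" where
  "Ch3 i0 x = x $ i0 ^ 3 - 3 * x $ i0 * (\<Sum>i\<in>UNIV - {i0}. (x $ i)\<^sup>2)"

end

theory Submission
  imports Defs
begin

text \<open>Let \<open>e\<close> be the distinguished unit vector and, for each other coordinate \<open>i\<close>, let \<open>u\<^sub>i, w\<^sub>i\<close>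
  be the two unit vectors at angle \<open>2\<pi>/3\<close> to \<open>e\<close> in the \<open>(e, e\<^sub>i)\<close>-plane. The identity says that
  the tensor of \<open>Ch\<^sub>3\<close> is \<open>A = (n+2)/3 e\<^sup>\<otimes>\<^sup>3 + 4/3 \<Sum>\<^sub>i (u\<^sub>i\<^sup>\<otimes>\<^sup>3 + w\<^sub>i\<^sup>\<otimes>\<^sup>3)\<close>, so that \<open>A/(3n-2)\<close> is a convex
  combination of the cubes \<open>v\<^sup>\<otimes>\<^sup>3\<close> of the unit vectors where \<open>Ch\<^sub>3\<close> takes its maximum \<open>1\<close>. The
  trilinear form of \<open>A\<close> is bounded by \<open>|x| |y| |z|\<close>, so each such \<open>v\<^sup>\<otimes>\<^sup>3\<close> maximizes \<open>\<langle>A, X\<rangle>\<close> over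
  unit rank-one tensors \<open>X\<close>. At the points \<open>A/|A| + t v\<^sup>\<otimes>\<^sup>3\<close>, \<open>t > 0\<close>, this maximizer becomes
  quantitatively strict, which makes the spectral norm differentiable there with gradient \<open>v\<^sup>\<otimes>\<^sup>3\<close>;
  letting \<open>t \<rightarrow> 0\<close> puts every \<open>v\<^sup>\<otimes>\<^sup>3\<close>, hence \<open>A/(3n-2)\<close>, into the Clarke gradient at \<open>A/|A|\<close>.\<close>

section \<open>Rank-one tensors\<close>

lemma outer_prod_nth [simp]: "outer_prod xs $ f = (\<Prod>j\<in>UNIV. xs j $ f j)"
  by (simp add: outer_prod_def)

lemma inner_outer_prod:
  fixes us xs :: "'d::finite \<Rightarrow> real^'n::finite"
  shows "inner (outer_prod us) (outer_prod xs) = (\<Prod>j\<in>UNIV. inner (us j) (xs j))"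
proof -
  have "inner (outer_prod us) (outer_prod xs) = (\<Sum>f\<in>UNIV. \<Prod>j\<in>UNIV. us j $ f j * xs j $ f j)"
    by (simp add: inner_vec_def prod.distrib)
  also have "\<dots> = (\<Prod>j\<in>UNIV. \<Sum>i\<in>UNIV. us j $ i * xs j $ i)"
    using prod_sum_PiE[of "UNIV::'d set" "\<lambda>_. UNIV::'n set" "\<lambda>j i. us j $ i * xs j $ i"] by simp
  finally show ?thesis
    by (simp add: inner_vec_def)
qed

lemma inner_tensor_power:
  "inner (tensor_power v :: ('n::finite, 'd::finite) tensor) (tensor_power x) = inner v x ^ CARD('d)"
  by (simp add: tensor_power_def inner_outer_prod)

lemma norm_outer_prod:
  fixes xs :: "'d::finite \<Rightarrow> real^'n::finite"
  assumes "\<forall>j. norm (xs j) = 1"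
  shows "norm (outer_prod xs) = 1"
proof -
  have "inner (xs j) (xs j) = 1" for j
    using assms by (simp add: dot_square_norm)
  then show ?thesis
    by (simp add: norm_eq_sqrt_inner inner_outer_prod)
qed

lemma subspace_sym_tensors: "subspace sym_tensors"
  unfolding subspace_def sym_tensors_def by auto

lemma tensor_power_in_sym_tensors:
  fixes x :: "real^'n::finite"
  shows "(tensor_power x :: ('n, 'd::finite) tensor) \<in> sym_tensors"
  unfolding sym_tensors_def tensor_power_def
proof (intro CollectI allI impI)
  fix \<pi> :: "'d \<Rightarrow> 'd" and f :: "'d \<Rightarrow> 'n"
  assume "bij \<pi>"
  then show "outer_prod (\<lambda>_. x) $ (f \<circ> \<pi>) = outer_prod (\<lambda>_. x) $ f"
    using prod.reindex_bij_betw[of \<pi> UNIV UNIV "\<lambda>j. x $ f j"] by (simp add: bij_betw_def)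
qed

lemma sum_sym_tensor_reindex:
  fixes D :: "('n::finite, 'd::finite) tensor"
  assumes "D \<in> sym_tensors" and "bij \<pi>"
  shows "(\<Sum>f\<in>UNIV. D $ f * G f) = (\<Sum>f\<in>UNIV. D $ f * G (f \<circ> \<pi>))"
proof -
  have "\<pi> \<circ> inv \<pi> = id" "inv \<pi> \<circ> \<pi> = id"
    using assms(2) by (simp_all add: bij_def surj_iff inj_iff)
  then have "(\<Sum>f\<in>UNIV. D $ f * G f) = (\<Sum>f\<in>UNIV. D $ (f \<circ> \<pi>) * G (f \<circ> \<pi>))"
    by (intro sum.reindex_bij_witness[of _ "\<lambda>f. f \<circ> \<pi>" "\<lambda>f. f \<circ> inv \<pi>"])
       (simp_all add: comp_assoc)
  also have "\<dots> = (\<Sum>f\<in>UNIV. D $ f * G (f \<circ> \<pi>))"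
    using assms by (simp add: sym_tensors_def)
  finally show ?thesis .
qed

section \<open>The spectral norm\<close>

lemma bdd_above_spectral_values:
  fixes q :: "('n::finite, 'd::finite) tensor"
  shows "bdd_above {inner q (outer_prod xs) | xs. \<forall>j. norm (xs j) = 1}"
proof (rule bdd_aboveI)
  fix y assume "y \<in> {inner q (outer_prod xs) | xs. \<forall>j. norm (xs j) = 1}"
  then obtain xs where y: "y = inner q (outer_prod xs)" and unit: "\<forall>j. norm (xs j) = 1"
    by blast
  have "y \<le> norm q * norm (outer_prod xs)"
    unfolding y by (rule norm_cauchy_schwarz)
  then show "y \<le> norm q"
    by (simp add: norm_outer_prod[OF unit])
qed

lemma inner_outer_prod_le_spectral_norm:
  fixes q :: "('n::finite, 'd::finite) tensor"
  assumes "\<forall>j. norm (xs j) = 1"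
  shows "inner q (outer_prod xs) \<le> spectral_norm q"
  unfolding spectral_norm_def using assms by (intro cSup_upper bdd_above_spectral_values) blast

lemma spectral_norm_le:
  fixes q :: "('n::finite, 'd::finite) tensor"
  assumes "\<And>xs. \<forall>j. norm (xs j) = 1 \<Longrightarrow> inner q (outer_prod xs) \<le> M"
  shows "spectral_norm q \<le> M"
  unfolding spectral_norm_def
proof (rule cSup_least)
  let ?e = "\<lambda>_::'d. axis (undefined::'n) (1::real)"
  have "\<forall>j. norm (?e j) = 1"
    by simp
  then have "inner q (outer_prod ?e) \<in> {inner q (outer_prod xs) | xs. \<forall>j. norm (xs j) = 1}"
    by blast
  then show "{inner q (outer_prod xs) | xs. \<forall>j. norm (xs j) = 1} \<noteq> {}"
    by blast
next
  fix y
  assume "y \<in> {inner q (outer_prod xs) | xs. \<forall>j. norm (xs j) = 1}"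
  then obtain xs where "y = inner q (outer_prod xs)" and "\<forall>j. norm (xs j) = 1"
    by blast
  then show "y \<le> M"
    using assms[of xs] by simp
qed

text \<open>Moving \<open>q\<close> by \<open>t > 0\<close> in the direction of a maximizing rank-one tensor \<open>V\<close> makes that
  maximizer strict in a quadratic way: for a unit rank-one \<open>X\<close> one has
  \<open>\<langle>V, X\<rangle> = 1 - |X - V|\<^sup>2/2\<close>, and the resulting loss \<open>t |X - V|\<^sup>2/2\<close> absorbs the possible gain
  \<open>|h| |X - V|\<close> up to \<open>|h|\<^sup>2/(2t)\<close>.\<close>

lemma spectral_norm_le_quadratic:
  fixes q :: "('n::finite, 'd::finite) tensor"
  assumes unit_vs: "\<forall>j. norm (vs j) = 1"
    and max: "\<And>xs. \<forall>j. norm (xs j) = 1 \<Longrightarrow> inner q (outer_prod xs) \<le> inner q (outer_prod vs)"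
    and "t > 0"
  shows "spectral_norm (q + t *\<^sub>R outer_prod vs + h)
           \<le> inner q (outer_prod vs) + t + inner (outer_prod vs) h + (norm h)\<^sup>2 / (2 * t)"
proof (rule spectral_norm_le)
  fix xs :: "'d \<Rightarrow> real^'n"
  assume unit_xs: "\<forall>j. norm (xs j) = 1"
  define V where "V = outer_prod vs"
  define X where "X = outer_prod xs"
  define d where "d = norm (X - V)"
  have "inner V V = 1" "inner X X = 1"
    using norm_outer_prod[OF unit_vs] norm_outer_prod[OF unit_xs]
    by (simp_all add: V_def X_def dot_square_norm)
  then have "d\<^sup>2 = 2 - 2 * inner V X"
    by (simp add: d_def power2_norm_eq_inner inner_diff_left inner_diff_right inner_commute)
  then have VX: "inner V X = 1 - d\<^sup>2 / 2"
    by linarith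
  have hX: "inner h X \<le> inner h V + norm h * d"
    using norm_cauchy_schwarz[of h "X - V"] by (simp add: d_def inner_diff_right)
  have "2 * t * (norm h * d) \<le> t\<^sup>2 * d\<^sup>2 + (norm h)\<^sup>2"
    using sum_squares_bound[of "t * d" "norm h"] by (simp add: power_mult_distrib algebra_simps)
  then have "norm h * d \<le> t * d\<^sup>2 / 2 + (norm h)\<^sup>2 / (2 * t)"
    using \<open>t > 0\<close> by (simp add: field_simps power2_eq_square)
  moreover have "inner q X \<le> inner q V"
    using max[OF unit_xs] by (simp add: X_def V_def)
  moreover have "t * inner V X = t - t * d\<^sup>2 / 2"
    using VX by (simp add: right_diff_distrib)
  ultimately have "inner q X + t * inner V X + inner h X
      \<le> inner q V + t + inner h V + (norm h)\<^sup>2 / (2 * t)"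
    using hX by linarith
  then show "inner (q + t *\<^sub>R outer_prod vs + h) (outer_prod xs)
      \<le> inner q (outer_prod vs) + t + inner (outer_prod vs) h + (norm h)\<^sup>2 / (2 * t)"
    by (simp add: X_def V_def inner_add_left inner_commute[of h])
qed

lemma spectral_norm_has_derivative_at_shifted_maximizer:
  fixes q :: "('n::finite, 'd::finite) tensor"
  assumes unit_vs: "\<forall>j. norm (vs j) = 1"
    and max: "\<And>xs. \<forall>j. norm (xs j) = 1 \<Longrightarrow> inner q (outer_prod xs) \<le> inner q (outer_prod vs)"
    and "t > 0"
  shows "(spectral_norm has_derivative inner (outer_prod vs)) (at (q + t *\<^sub>R outer_prod vs) within S)"
proof -
  define V where "V = outer_prod vs"
  define p where "p = q + t *\<^sub>R V"
  define m where "m = inner q V"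
  have "inner V V = 1"
    using norm_outer_prod[OF unit_vs] by (simp add: V_def dot_square_norm)
  then have "inner (p + h) V = m + t + inner V h" for h
    by (simp add: p_def m_def inner_add_left inner_commute[of h])
  then have lower: "m + t + inner V h \<le> spectral_norm (p + h)" for h
    using inner_outer_prod_le_spectral_norm[OF unit_vs, of "p + h"] by (simp add: V_def)
  have upper: "spectral_norm (p + h) \<le> m + t + inner V h + (norm h)\<^sup>2 / (2 * t)" for h
    using spectral_norm_le_quadratic[OF unit_vs max \<open>t > 0\<close>, of h] by (simp add: p_def m_def V_def)
  have at_p: "spectral_norm p = m + t"
    using lower[of 0] upper[of 0] by simp
  show ?thesis
    unfolding V_def[symmetric] p_def[symmetric]
  proof (subst has_derivative_within_alt, intro conjI allI impI)
    show "bounded_linear (inner V)"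
      by (rule bounded_linear_inner_right)
    fix e :: real
    assume "e > 0"
    show "\<exists>d>0. \<forall>y\<in>S. norm (y - p) < d \<longrightarrow>
        norm (spectral_norm y - spectral_norm p - inner V (y - p)) \<le> e * norm (y - p)"
    proof (intro exI[of _ "2 * t * e"] conjI ballI impI)
      show "0 < 2 * t * e"
        using \<open>t > 0\<close> \<open>e > 0\<close> by simp
      fix y
      assume close: "norm (y - p) < 2 * t * e"
      define h where "h = y - p"
      have "norm h * norm h \<le> (2 * t * e) * norm h"
        using close by (intro mult_right_mono) (simp_all add: h_def)
      then have "(norm h)\<^sup>2 / (2 * t) \<le> e * norm h"
        using \<open>t > 0\<close> by (simp add: field_simps power2_eq_square)
      then show "norm (spectral_norm y - spectral_norm p - inner V (y - p)) \<le> e * norm (y - p)"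
        using lower[of h] upper[of h] at_p by (simp add: h_def)
    qed
  qed
qed

lemma tensor_power_in_clarke_grad:
  fixes p :: "('n::finite, 'd::finite) tensor"
  assumes "p \<in> sym_tensors" and "norm v = 1"
    and max: "\<And>xs. \<forall>j. norm (xs j) = 1 \<Longrightarrow> inner p (outer_prod xs) \<le> inner p (tensor_power v)"
  shows "tensor_power v \<in> clarke_grad_on sym_tensors spectral_norm p"
proof -
  define V :: "('n, 'd) tensor" where "V = tensor_power v"
  define ps where "ps = (\<lambda>k::nat. p + inverse (real (Suc k)) *\<^sub>R V)"
  have V_sym: "V \<in> sym_tensors"
    unfolding V_def by (rule tensor_power_in_sym_tensors)
  have "ps k \<in> sym_tensors" for k
    unfolding ps_def using assms(1) V_sym subspace_sym_tensors
    by (intro subspace_add subspace_scale) auto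
  moreover have "(spectral_norm has_derivative inner V) (at (ps k) within sym_tensors)" for k
    using spectral_norm_has_derivative_at_shifted_maximizer[of "\<lambda>_. v" p "inverse (real (Suc k))"]
      max \<open>norm v = 1\<close> by (simp add: ps_def V_def tensor_power_def)
  moreover have "ps \<longlonglongrightarrow> p"
    using tendsto_add[OF tendsto_const tendsto_scaleR[OF LIMSEQ_inverse_real_of_nat tendsto_const]]
    by (simp add: ps_def)
  ultimately show ?thesis
    unfolding clarke_grad_on_def V_def[symmetric]
    by (intro hull_inc CollectI exI[of _ ps] exI[of _ "\<lambda>_. V"]) (simp add: V_sym)
qed

section \<open>Trilinear forms of order-three tensors\<close>

definition trilinear :: "('n::finite, 3) tensor \<Rightarrow> real^'n \<Rightarrow> real^'n \<Rightarrow> real^'n \<Rightarrow> real" where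
  "trilinear D x y z = (\<Sum>f\<in>UNIV. D $ f * (x $ f 1 * y $ f 2 * z $ f 3))"

lemma prod_UNIV_3: "prod g (UNIV :: 3 set) = g 1 * g 2 * g 3"
  unfolding UNIV_3 by (simp add: ac_simps)

lemma inner_outer_prod_eq_trilinear: "inner D (outer_prod xs) = trilinear D (xs 1) (xs 2) (xs 3)"
  by (simp add: trilinear_def inner_vec_def prod_UNIV_3)

lemma trilinear_eq_inner:
  "trilinear D x y z = inner D (outer_prod (\<lambda>j. if j = 1 then x else if j = 2 then y else z))"
  by (simp add: inner_outer_prod_eq_trilinear)

lemma inner_tensor_power_eq_trilinear: "inner D (tensor_power x) = trilinear D x x x"
  by (simp add: tensor_power_def inner_outer_prod_eq_trilinear)

lemma trilinear_tensor_power: "trilinear (tensor_power v) x y z = inner v x * inner v y * inner v z"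
  unfolding trilinear_eq_inner tensor_power_def inner_outer_prod prod_UNIV_3 by simp

lemma trilinear_add_tensor: "trilinear (A + B) x y z = trilinear A x y z + trilinear B x y z"
  by (simp add: trilinear_eq_inner inner_add_left)

lemma trilinear_scaleR_tensor: "trilinear (c *\<^sub>R A) x y z = c * trilinear A x y z"
  by (simp add: trilinear_eq_inner)

lemma trilinear_sum_tensor: "trilinear (\<Sum>i\<in>I. A i) x y z = (\<Sum>i\<in>I. trilinear (A i) x y z)"
  by (simp add: trilinear_eq_inner inner_sum_left)

lemma trilinear_add:
  "trilinear D (x + x') y z = trilinear D x y z + trilinear D x' y z"
  "trilinear D x (y + y') z = trilinear D x y z + trilinear D x y' z"
  "trilinear D x y (z + z') = trilinear D x y z + trilinear D x y z'"
  by (simp_all add: trilinear_def distrib_left distrib_right sum.distrib)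

lemma trilinear_diff:
  "trilinear D (x - x') y z = trilinear D x y z - trilinear D x' y z"
  "trilinear D x (y - y') z = trilinear D x y z - trilinear D x y' z"
  "trilinear D x y (z - z') = trilinear D x y z - trilinear D x y z'"
  by (simp_all add: trilinear_def left_diff_distrib right_diff_distrib sum_subtractf)

lemma trilinear_commute12:
  assumes "D \<in> sym_tensors"
  shows "trilinear D x y z = trilinear D y x z"
  using sum_sym_tensor_reindex[OF assms, of "Transposition.transpose 1 2"
      "\<lambda>f. x $ f 1 * y $ f 2 * z $ f 3"]
  by (simp add: trilinear_def mult_ac)

lemma trilinear_commute23:
  assumes "D \<in> sym_tensors"
  shows "trilinear D x y z = trilinear D x z y"
  using sum_sym_tensor_reindex[OF assms, of "Transposition.transpose 2 3"
      "\<lambda>f. x $ f 1 * y $ f 2 * z $ f 3"]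
  by (simp add: trilinear_def mult_ac)

lemma trilinear_axis:
  fixes D :: "('n::finite, 3) tensor"
  shows "trilinear D (axis (f 1) 1) (axis (f 2) 1) (axis (f 3) 1) = D $ f"
proof -
  have "g = f \<longleftrightarrow> g 1 = f 1 \<and> g 2 = f 2 \<and> g 3 = f 3" for g :: "3 \<Rightarrow> 'n"
    by (metis ext exhaust_3)
  then have "trilinear D (axis (f 1) 1) (axis (f 2) 1) (axis (f 3) 1)
      = (\<Sum>g\<in>UNIV. if g = f then D $ g else 0)"
    unfolding trilinear_def by (intro sum.cong) (auto simp: axis_def)
  then show ?thesis
    by simp
qed

text \<open>Polarization: for the cubic form \<open>T x = D(x,x,x)\<close> of a symmetric \<open>D\<close> one has
  \<open>T(x+y) + T(x-y) - 2 T x = 6 D(x,y,y)\<close>, and \<open>D(x,y,z)\<close> is then read off from \<open>D(x,y+z,y+z)\<close>.\<close>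

lemma sym_tensor_eq_0_if_cubic_form_0:
  assumes D: "D \<in> sym_tensors" and cubic: "\<And>x. trilinear D x x x = 0"
  shows "D = 0"
proof -
  have yy: "trilinear D x y y = 0" for x y
  proof -
    have "trilinear D y x y = trilinear D x y y" "trilinear D y y x = trilinear D x y y"
      using trilinear_commute12[OF D] trilinear_commute23[OF D] by metis+
    moreover have "trilinear D (x + y) (x + y) (x + y) + trilinear D (x - y) (x - y) (x - y)
        = 2 * trilinear D x x x
          + 2 * (trilinear D x y y + trilinear D y x y + trilinear D y y x)"
      by (simp add: trilinear_add trilinear_diff)
    ultimately show ?thesis
      using cubic[of "x + y"] cubic[of "x - y"] cubic[of x] by simp
  qed
  have "trilinear D x y z = 0" for x y z
  proof -
    have "trilinear D x z y = trilinear D x y z"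
      using trilinear_commute23[OF D] by metis
    moreover have "trilinear D x (y + z) (y + z)
        = trilinear D x y y + trilinear D x z z + trilinear D x y z + trilinear D x z y"
      by (simp add: trilinear_add)
    ultimately show ?thesis
      using yy[of x "y + z"] yy[of x y] yy[of x z] by simp
  qed
  then show ?thesis
    using trilinear_axis[of D] by (simp add: vec_eq_iff)
qed

lemma sym_tensor_eq_if_cubic_forms_eq:
  fixes A B :: "('n::finite, 3) tensor"
  assumes "A \<in> sym_tensors" "B \<in> sym_tensors"
    and "\<And>x. inner A (tensor_power x) = inner B (tensor_power x)"
  shows "A = B"
proof -
  have "A - B \<in> sym_tensors"
    using assms(1,2) by (rule subspace_diff[OF subspace_sym_tensors])
  moreover have "trilinear (A - B) x x x = 0" for x
    using assms(3)[of x] by (simp add: inner_tensor_power_eq_trilinear[symmetric] inner_diff_left)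
  ultimately show ?thesis
    using sym_tensor_eq_0_if_cubic_form_0 by fastforce
qed

section \<open>The tensor of \<open>Ch\<^sub>3\<close>\<close>

text \<open>\<open>tilted_axis i0 i (- 1)\<close> and \<open>tilted_axis i0 i 1\<close> are the vectors \<open>u\<^sub>i\<close> and \<open>w\<^sub>i\<close> above,
  and \<open>ch3_tensor i0\<close> is \<open>A\<close>.\<close>

definition tilted_axis :: "'n::finite \<Rightarrow> 'n \<Rightarrow> real \<Rightarrow> real^'n" where
  "tilted_axis i0 i s = (- 1 / 2) *\<^sub>R axis i0 1 + (s * sqrt 3 / 2) *\<^sub>R axis i 1"

definition ch3_tensor :: "'n::finite \<Rightarrow> ('n, 3) tensor" where
  "ch3_tensor i0 = ((real CARD('n) + 2) / 3) *\<^sub>R tensor_power (axis i0 1)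
     + (4 / 3) *\<^sub>R (\<Sum>i\<in>UNIV - {i0}.
          tensor_power (tilted_axis i0 i (- 1)) + tensor_power (tilted_axis i0 i 1))"

lemma tilted_axis_nth:
  "tilted_axis i0 i s $ j = (if j = i0 then - 1 / 2 else 0) + (if j = i then s * sqrt 3 / 2 else 0)"
  by (simp add: tilted_axis_def axis_def)

lemma card_UNIV_minus_singleton: "real (card (UNIV - {i0 :: 'n::finite})) = real CARD('n) - 1"
  by (simp add: card_Diff_singleton of_nat_diff)

lemma inner_tilted_axis: "inner (tilted_axis i0 i s) x = (- x $ i0 + s * sqrt 3 * x $ i) / 2"
  by (simp add: tilted_axis_def inner_add_left inner_diff_left inner_axis' field_simps)

lemma trilinear_tilted_axis_pair:
  "trilinear (tensor_power (tilted_axis i0 i (- 1))) x y z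
     + trilinear (tensor_power (tilted_axis i0 i 1)) x y z
   = - (x $ i0 * y $ i0 * z $ i0) / 4
     - 3 / 4 * (x $ i0 * y $ i * z $ i + x $ i * y $ i0 * z $ i + x $ i * y $ i * z $ i0)"
proof -
  have "sqrt 3 * sqrt 3 = (3::real)"
    by simp
  then show ?thesis
    by (simp add: trilinear_tensor_power inner_tilted_axis field_simps)
qed

lemma trilinear_ch3_tensor:
  fixes i0 :: "'n::finite"
  shows "trilinear (ch3_tensor i0) x y z = x $ i0 * y $ i0 * z $ i0
     - (\<Sum>i\<in>UNIV - {i0}. x $ i0 * y $ i * z $ i + x $ i * y $ i0 * z $ i + x $ i * y $ i * z $ i0)"
proof -
  let ?c = "x $ i0 * y $ i0 * z $ i0"
  let ?P = "\<lambda>i. x $ i0 * y $ i * z $ i + x $ i * y $ i0 * z $ i + x $ i * y $ i * z $ i0"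
  have "trilinear (ch3_tensor i0) x y z
      = (real CARD('n) + 2) / 3 * ?c + 4 / 3 * (\<Sum>i\<in>UNIV - {i0}. - ?c / 4 - 3 / 4 * ?P i)"
    unfolding ch3_tensor_def trilinear_add_tensor trilinear_scaleR_tensor trilinear_sum_tensor
      trilinear_tilted_axis_pair
    by (simp add: trilinear_tensor_power inner_axis')
  also have "(\<Sum>i\<in>UNIV - {i0}. - ?c / 4 - 3 / 4 * ?P i)
      = (real CARD('n) - 1) * (- ?c / 4) - 3 / 4 * (\<Sum>i\<in>UNIV - {i0}. ?P i)"
    by (simp only: sum_subtractf sum_constant sum_distrib_left[symmetric] card_UNIV_minus_singleton)
  finally show ?thesis
    by (simp add: field_simps)
qed

lemma cubic_form_ch3_tensor: "inner (ch3_tensor i0) (tensor_power x) = Ch3 i0 x"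
  by (simp add: inner_tensor_power_eq_trilinear trilinear_ch3_tensor Ch3_def sum_distrib_left
      power2_eq_square power3_eq_cube algebra_simps)

lemma cubic_form_ch3_tensor_as_sum_of_cubes:
  fixes i0 :: "'n::finite"
  shows "inner (ch3_tensor i0) (tensor_power x)
     = (real CARD('n) + 2) / 3 * x $ i0 ^ 3
       + 4 / 3 * (\<Sum>i\<in>UNIV - {i0}.
           - (((x $ i0 + sqrt 3 * x $ i) / 2) ^ 3) + ((- (x $ i0) + sqrt 3 * x $ i) / 2) ^ 3)"
proof -
  have "inner (tilted_axis i0 i (- 1)) x ^ 3 = - (((x $ i0 + sqrt 3 * x $ i) / 2) ^ 3)" for i
  proof -
    have "inner (tilted_axis i0 i (- 1)) x = - ((x $ i0 + sqrt 3 * x $ i) / 2)"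
      by (simp add: inner_tilted_axis field_simps)
    then show ?thesis
      by simp
  qed
  then show ?thesis
    by (simp add: ch3_tensor_def inner_add_left inner_sum_left inner_tensor_power inner_tilted_axis
        inner_axis')
qed

lemma Ch3_decomposition:
  fixes i0 :: "'n::finite"
  shows "Ch3 i0 x / (3 * real CARD('n) - 2)
     = (real CARD('n) + 2) / (9 * real CARD('n) - 6) * x $ i0 ^ 3
       + 4 / (9 * real CARD('n) - 6) * (\<Sum>i\<in>UNIV - {i0}.
           - (((x $ i0 + sqrt 3 * x $ i) / 2) ^ 3) + ((- (x $ i0) + sqrt 3 * x $ i) / 2) ^ 3)"
    (is "_ = (?n + 2) / _ * ?c + _ * ?S")
proof -
  have "?n \<ge> 1"
    by (simp add: Suc_le_eq)
  then have "3 * ?n - 2 \<noteq> 0"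
    by linarith
  moreover have "d \<noteq> 0 \<Longrightarrow> (a / 3 * c + 4 / 3 * S) / d = a / (3 * d) * c + 4 / (3 * d) * S"
    for a c S d :: real
    by (simp add: field_simps)
  moreover have "Ch3 i0 x = (?n + 2) / 3 * ?c + 4 / 3 * ?S"
    unfolding cubic_form_ch3_tensor[symmetric] by (rule cubic_form_ch3_tensor_as_sum_of_cubes)
  moreover have "9 * ?n - 6 = 3 * (3 * ?n - 2)"
    by simp
  ultimately show ?thesis
    by simp
qed

lemma ch3_tensor_in_sym_tensors: "ch3_tensor i0 \<in> sym_tensors"
  unfolding ch3_tensor_def using subspace_sym_tensors
  by (intro subspace_add subspace_scale subspace_sum tensor_power_in_sym_tensors)

definition ch3_contraction :: "'n::finite \<Rightarrow> real^'n \<Rightarrow> real^'n \<Rightarrow> real^'n" where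
  "ch3_contraction i0 x y = (\<chi> j. if j = i0 then x $ i0 * y $ i0 - (\<Sum>i\<in>UNIV - {i0}. x $ i * y $ i)
                                  else - (y $ i0 * x $ j + x $ i0 * y $ j))"

lemma trilinear_ch3_tensor_eq_inner_contraction:
  "trilinear (ch3_tensor i0) x y z = inner z (ch3_contraction i0 x y)"
proof -
  have "inner z (ch3_contraction i0 x y)
      = z $ i0 * (x $ i0 * y $ i0 - (\<Sum>i\<in>UNIV - {i0}. x $ i * y $ i))
        + (\<Sum>i\<in>UNIV - {i0}. z $ i * - (y $ i0 * x $ i + x $ i0 * y $ i))"
    by (simp add: inner_vec_def sum.remove[of UNIV i0] ch3_contraction_def)
  also have "\<dots> = x $ i0 * y $ i0 * z $ i0
      - (\<Sum>i\<in>UNIV - {i0}. x $ i0 * y $ i * z $ i + x $ i * y $ i0 * z $ i + x $ i * y $ i * z $ i0)"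
    by (simp add: sum_distrib_left sum.distrib sum_negf sum_subtractf algebra_simps)
  finally show ?thesis
    by (simp add: trilinear_ch3_tensor)
qed

lemma norm_power2_eq_component_plus_rest:
  fixes x :: "real^'n::finite"
  shows "(norm x)\<^sup>2 = (x $ i0)\<^sup>2 + (\<Sum>j\<in>UNIV - {i0}. (x $ j)\<^sup>2)"
  unfolding power2_norm_eq_inner inner_vec_def by (simp add: sum.remove[of UNIV i0] power2_eq_square)

text \<open>In \<open>|ch3_contraction i0 x y|\<^sup>2\<close> the cross terms \<open>\<plusminus>2 x\<^sub>i\<^sub>0 y\<^sub>i\<^sub>0 S\<close> cancel, and Cauchy-Schwarz
  \<open>S\<^sup>2 \<le> X Y\<close> for the parts orthogonal to \<open>axis i0 1\<close> gives \<open>|x|\<^sup>2 |y|\<^sup>2\<close> as a bound.\<close>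

lemma norm_ch3_contraction_le: "norm (ch3_contraction i0 x y) \<le> norm x * norm y"
proof -
  define S where "S = (\<Sum>j\<in>UNIV - {i0}. x $ j * y $ j)"
  define X where "X = (\<Sum>j\<in>UNIV - {i0}. (x $ j)\<^sup>2)"
  define Y where "Y = (\<Sum>j\<in>UNIV - {i0}. (y $ j)\<^sup>2)"
  have "(\<Sum>j\<in>UNIV - {i0}. (ch3_contraction i0 x y $ j)\<^sup>2)
      = (\<Sum>j\<in>UNIV - {i0}. (y $ i0 * x $ j + x $ i0 * y $ j)\<^sup>2)"
    by (intro sum.cong) (auto simp: ch3_contraction_def power2_eq_square algebra_simps)
  also have "\<dots> = (y $ i0)\<^sup>2 * X + 2 * x $ i0 * y $ i0 * S + (x $ i0)\<^sup>2 * Y"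
    by (simp add: X_def Y_def S_def power2_eq_square sum_distrib_left sum.distrib algebra_simps)
  finally have "(norm (ch3_contraction i0 x y))\<^sup>2
      = (x $ i0 * y $ i0 - S)\<^sup>2 + (y $ i0)\<^sup>2 * X + 2 * x $ i0 * y $ i0 * S + (x $ i0)\<^sup>2 * Y"
    by (simp add: norm_power2_eq_component_plus_rest[of _ i0] ch3_contraction_def S_def)
  also have "\<dots> \<le> ((x $ i0)\<^sup>2 + X) * ((y $ i0)\<^sup>2 + Y)"
    using Cauchy_Schwarz_ineq_sum[of "\<lambda>j. x $ j" "\<lambda>j. y $ j" "UNIV - {i0}"]
    by (simp add: S_def X_def Y_def power2_diff algebra_simps)
  also have "\<dots> = (norm x * norm y)\<^sup>2"
    by (simp add: power_mult_distrib norm_power2_eq_component_plus_rest[of _ i0] X_def Y_def)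
  finally show ?thesis
    by (rule power2_le_imp_le) simp
qed

lemma trilinear_ch3_tensor_le: "trilinear (ch3_tensor i0) x y z \<le> norm x * norm y * norm z"
proof -
  have "inner z (ch3_contraction i0 x y) \<le> norm z * norm (ch3_contraction i0 x y)"
    by (rule norm_cauchy_schwarz)
  also have "\<dots> \<le> norm z * (norm x * norm y)"
    by (intro mult_left_mono norm_ch3_contraction_le) simp
  finally show ?thesis
    by (simp add: trilinear_ch3_tensor_eq_inner_contraction mult_ac)
qed

lemma norm_tilted_axis:
  assumes "i \<noteq> i0" and "s\<^sup>2 = 1"
  shows "norm (tilted_axis i0 i s) = 1"
proof -
  have "sqrt 3 * sqrt 3 = (3::real)"
    by simp
  with assms have "inner (tilted_axis i0 i s) (tilted_axis i0 i s) = 1"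
    by (simp add: inner_tilted_axis tilted_axis_nth power2_eq_square field_simps)
  then show ?thesis
    by (simp add: norm_eq_sqrt_inner)
qed

lemma Ch3_tilted_axis:
  assumes "i \<noteq> i0" and "s\<^sup>2 = 1"
  shows "Ch3 i0 (tilted_axis i0 i s) = 1"
proof -
  have "(\<Sum>j\<in>UNIV - {i0}. (tilted_axis i0 i s $ j)\<^sup>2) = (\<Sum>j\<in>UNIV - {i0}. if j = i then 3 / 4 else 0)"
    using assms by (intro sum.cong) (auto simp: tilted_axis_nth power_mult_distrib power_divide)
  also have "\<dots> = 3 / 4"
    using assms(1) by simp
  finally show ?thesis
    using assms(1) by (simp add: Ch3_def tilted_axis_nth power3_eq_cube)
qed

lemma Ch3_axis: "Ch3 i0 (axis i0 1) = 1"
  by (simp add: Ch3_def axis_def)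

lemma ch3_tensor_nonzero: "ch3_tensor i0 \<noteq> 0"
  using cubic_form_ch3_tensor[of i0 "axis i0 1"] Ch3_axis[of i0] by auto

lemma tensor_power_in_clarke_grad_ch3_tensor:
  fixes i0 :: "'n::finite"
  assumes "norm v = 1" and "Ch3 i0 v = 1"
  shows "tensor_power v
    \<in> clarke_grad_on sym_tensors spectral_norm (ch3_tensor i0 /\<^sub>R norm (ch3_tensor i0))"
proof (rule tensor_power_in_clarke_grad)
  show "ch3_tensor i0 /\<^sub>R norm (ch3_tensor i0) \<in> sym_tensors"
    by (rule subspace_scale[OF subspace_sym_tensors ch3_tensor_in_sym_tensors])
  show "norm v = 1"
    by (fact assms(1))
  fix xs :: "3 \<Rightarrow> real^'n"
  assume "\<forall>j. norm (xs j) = 1"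
  then have "inner (ch3_tensor i0) (outer_prod xs) \<le> inner (ch3_tensor i0) (tensor_power v)"
    using trilinear_ch3_tensor_le[of i0 "xs 1" "xs 2" "xs 3"]
    by (simp add: inner_outer_prod_eq_trilinear cubic_form_ch3_tensor assms(2))
  then show "inner (ch3_tensor i0 /\<^sub>R norm (ch3_tensor i0)) (outer_prod xs)
      \<le> inner (ch3_tensor i0 /\<^sub>R norm (ch3_tensor i0)) (tensor_power v)"
    by (simp add: mult_left_mono)
qed

lemma convex_combination_of_pairs_in:
  fixes E :: "'a::real_vector"
  assumes "convex C" and "finite I" and "I \<noteq> {}" and "E \<in> C"
    and "\<And>i. i \<in> I \<Longrightarrow> M i \<in> C" and "\<And>i. i \<in> I \<Longrightarrow> W i \<in> C"
    and "0 \<le> a" and "0 \<le> b" and "a + 2 * real (card I) * b = 1"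
  shows "a *\<^sub>R E + b *\<^sub>R (\<Sum>i\<in>I. M i + W i) \<in> C"
proof -
  define avg where "avg = (\<Sum>i\<in>I. (1 / real (card I)) *\<^sub>R ((1 / 2) *\<^sub>R M i + (1 / 2) *\<^sub>R W i))"
  have card: "real (card I) > 0"
    using assms(2,3) by (simp add: card_gt_0_iff)
  have "avg \<in> C"
    unfolding avg_def using assms card by (intro convex_sum convexD) auto
  moreover have "a \<le> 1"
    using assms(8,9) mult_nonneg_nonneg[of "2 * real (card I)" b] by linarith
  ultimately have "a *\<^sub>R E + (1 - a) *\<^sub>R avg \<in> C"
    using assms(1,4,7) by (intro convexD) simp_all
  moreover have "(1 - a) * (1 / real (card I)) * (1 / 2) = b"
    using assms(9) card by (simp add: field_simps)
  then have "(1 - a) *\<^sub>R avg = b *\<^sub>R (\<Sum>i\<in>I. M i + W i)"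
    by (simp add: avg_def scaleR_sum_right scaleR_add_right)
  ultimately show ?thesis
    by simp
qed

lemma ch3_decomposition_weights:
  fixes n :: real
  assumes "9 * n - 6 \<noteq> 0"
  shows "(n + 2) / (9 * n - 6) + 2 * (n - 1) * (4 / (9 * n - 6)) = 1"
proof -
  have "(n + 2) / (9 * n - 6) + 2 * (n - 1) * (4 / (9 * n - 6))
      = ((n + 2) + 2 * (n - 1) * 4) / (9 * n - 6)"
    by (simp only: add_divide_distrib times_divide_eq_right)
  also have "(n + 2) + 2 * (n - 1) * 4 = 9 * n - 6"
    by simp
  finally show ?thesis
    using assms by simp
qed

lemma ch3_tensor_decomposition:
  fixes i0 :: "'n::finite"
  shows "(1 / (3 * real CARD('n) - 2)) *\<^sub>R ch3_tensor i0
    = ((real CARD('n) + 2) / (9 * real CARD('n) - 6)) *\<^sub>R tensor_power (axis i0 1)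
      + (4 / (9 * real CARD('n) - 6)) *\<^sub>R (\<Sum>i\<in>UNIV - {i0}.
          tensor_power (tilted_axis i0 i (- 1)) + tensor_power (tilted_axis i0 i 1))"
proof -
  have "real CARD('n) \<ge> 1"
    by (simp add: Suc_le_eq)
  then show ?thesis
    by (simp add: ch3_tensor_def scaleR_add_right field_simps)
qed

lemma ch3_tensor_critical:
  fixes i0 :: "'n::finite"
  assumes "CARD('n) \<ge> 2"
  shows "critical_sym (ch3_tensor i0)"
proof -
  let ?n = "real CARD('n)"
  let ?C = "clarke_grad_on sym_tensors spectral_norm (ch3_tensor i0 /\<^sub>R norm (ch3_tensor i0))"
  have n: "?n \<ge> 2"
    using assms by simp
  then have "real (card (UNIV - {i0})) \<ge> 1"
    by (simp add: card_UNIV_minus_singleton)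
  then have nonempty: "UNIV - {i0} \<noteq> {}"
    by (metis card.empty of_nat_0 not_one_le_zero)
  have convex: "convex ?C"
    unfolding clarke_grad_on_def by (rule convex_convex_hull)
  have "9 * ?n - 6 \<noteq> 0"
    using n by linarith
  then have weights:
    "(?n + 2) / (9 * ?n - 6) + 2 * real (card (UNIV - {i0})) * (4 / (9 * ?n - 6)) = 1"
    unfolding card_UNIV_minus_singleton by (rule ch3_decomposition_weights)
  have "(1 / (3 * ?n - 2)) *\<^sub>R ch3_tensor i0 \<in> ?C"
    unfolding ch3_tensor_decomposition
    by (rule convex_combination_of_pairs_in[OF convex _ nonempty _ _ _ _ _ weights])
      (use n in \<open>auto intro!: tensor_power_in_clarke_grad_ch3_tensor norm_tilted_axis
        Ch3_tilted_axis Ch3_axis\<close>)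
  then show ?thesis
    unfolding critical_sym_def using ch3_tensor_in_sym_tensors ch3_tensor_nonzero by blast
qed

theorem corollary1p13:
  fixes i0 :: "'n::finite"
  assumes "CARD('n) \<ge> 2"
  shows "(\<forall>x::real^'n. let n = real CARD('n) in
            Ch3 i0 x / (3 * n - 2) =
              (n + 2) / (9 * n - 6) * x $ i0 ^ 3
              + 4 / (9 * n - 6) * (\<Sum>i\<in>UNIV - {i0}.
                   (- (((x $ i0 + sqrt 3 * x $ i) / 2) ^ 3) + ((- (x $ i0) + sqrt 3 * x $ i) / 2) ^ 3)))
       \<and> (\<exists>A::('n, 3) tensor. A \<in> sym_tensors \<and> (\<forall>x. inner A (tensor_power x) = Ch3 i0 x))
       \<and> (\<forall>A::('n, 3) tensor. A \<in> sym_tensors \<and> (\<forall>x. inner A (tensor_power x) = Ch3 i0 x)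
             \<longrightarrow> critical_sym A)"
proof -
  have "A = ch3_tensor i0"
    if "A \<in> sym_tensors" and "\<forall>x. inner A (tensor_power x) = Ch3 i0 x" for A :: "('n, 3) tensor"
    using that by (intro sym_tensor_eq_if_cubic_forms_eq ch3_tensor_in_sym_tensors)
      (simp_all add: cubic_form_ch3_tensor)
  then show ?thesis
    unfolding Let_def
    using Ch3_decomposition[of i0] ch3_tensor_in_sym_tensors[of i0] cubic_form_ch3_tensor[of i0]
      ch3_tensor_critical[OF assms, of i0]
    by blast
qed

end
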